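(* Let $\tau>0$, $\varepsilon>0$ and $\varepsilon_{\rm w}=\varepsilon^\tau$. Then $\max_{\bar x,\bar x'\in\bar{\mathcal X}}\varsigma(Q_{\bar x},Q_{\bar x'})\le C\varepsilon_{\rm w}^m$ and $\max_{\bar x,\bar x'\in\bar{\mathcal X}}\xi(\bar x,\bar x')\le C\varepsilon_{\rm w}^m$, for some $C>0$ depending on $\mathcal M,\rho$.
   Context: $\mathcal M\subset\mathbb R^d$: $m$-dimensional smooth, compact, connected, orientable manifold without boundary with induced metric, volume $d\mathcal V$, sectional curvatures bounded by $K$, reach $R\in(0,\infty)$, injectivity radius $\ge i_0>0$; $\varepsilon\le\min\{1,K^{-1/2},i_0,R/2\}$. $\mu$ a probability measure on $\mathcal M$ with $d\mu=\rho\,d\mathcal V$, $\rho$ continuous with $0<\rho_{\min}\le\rho\le\rho_{\max}$. $\varepsilon_{\rm n}=\varepsilon^{\tau+1}$. $\bar{\mathcal X}$ is a finite set of points in $\{x+h:x\in\mathcal M,h\perp T_x\mathcal M,\|h\|<\varepsilon_{\rm n}\}$, $Q_{\bar x}$ the orthogonal projection of $\bar x$ onto $\mathcal M$. For $Q,Q'\in\mathcal M$, $\varsigma(Q,Q')=\mathbb E_{x\sim\mu}[\mathbb 1_{\{\|x-Q\|<\varepsilon_{\rm n}^{2/3},\|x-Q'\|<\varepsilon_{\rm n}^{2/3}\}}\exp(-(\|Q-x\|^2+\|Q'-x\|^2)/(2\varepsilon_{\rm w}^2))]$; $\xi(\bar x,\bar x')=\exp\big(-(\|\bar x-Q_{\bar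 x}\|^2+\|\bar x'-Q_{\bar x'}\|^2)/(2\varepsilon_{\rm w}^2)\big)\varsigma(Q_{\bar x},Q_{\bar x'})$. *)

theory Defs
  imports "HOL-Analysis.Analysis" "HOL-Probability.Probability"
begin

fun Ck_on :: "nat \<Rightarrow> 'b::euclidean_space set \<Rightarrow> ('b \<Rightarrow> 'c::real_normed_vector) \<Rightarrow> bool" where
  "Ck_on 0 U f = continuous_on U f"
| "Ck_on (Suc k) U f =
     (f differentiable_on U \<and> (\<forall>b\<in>Basis. Ck_on k U (\<lambda>x. frechet_derivative f (at x) b)))"

definition smooth_on :: "'b::euclidean_space set \<Rightarrow> ('b \<Rightarrow> 'c::real_normed_vector) \<Rightarrow> bool" where
  "smooth_on U f = (\<forall>k. Ck_on k U f)"

text \<open>A local parametrisation (chart inverse) of M: a smooth immersion of an open set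
  of R^m which is a homeomorphism onto a relatively open subset of M.\<close>
definition is_chart :: "'a::euclidean_space set \<Rightarrow> (real^'m) set \<Rightarrow> (real^'m \<Rightarrow> 'a) \<Rightarrow> bool" where
  "is_chart M U \<phi> =
     (open U \<and> smooth_on U \<phi> \<and> inj_on \<phi> U \<and>
      (\<forall>u\<in>U. inj (frechet_derivative \<phi> (at u))) \<and>
      (\<exists>V. open V \<and> \<phi> ` U = M \<inter> V) \<and>
      continuous_on (\<phi> ` U) (inv_into U \<phi>))"

definition smooth_submanifold :: "'m::finite itself \<Rightarrow> 'a::euclidean_space set \<Rightarrow> bool" where
  "smooth_submanifold _ M =
     (\<forall>p\<in>M. \<exists>U (\<phi> :: real^'m \<Rightarrow> 'a). is_chart M U \<phi> \<and> p \<in> \<phi> ` U)"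

definition orientable :: "'m::finite itself \<Rightarrow> 'a::euclidean_space set \<Rightarrow> bool" where
  "orientable _ M =
     (\<exists>A :: ((real^'m) set \<times> (real^'m \<Rightarrow> 'a)) set.
        (\<forall>(U, \<phi>)\<in>A. is_chart M U \<phi>) \<and>
        M \<subseteq> (\<Union>(U, \<phi>)\<in>A. \<phi> ` U) \<and>
        (\<forall>(U1, \<phi>1)\<in>A. \<forall>(U2, \<phi>2)\<in>A. \<forall>x\<in>U1. \<phi>1 x \<in> \<phi>2 ` U2 \<longrightarrow>
           ((inv_into U2 \<phi>2 \<circ> \<phi>1) differentiable (at x) \<and>
            det (matrix (frechet_derivative (inv_into U2 \<phi>2 \<circ> \<phi>1) (at x))) > 0)))"

definition tangent_space :: "'m::finite itself \<Rightarrow> 'a::euclidean_space set \<Rightarrow> 'a \<Rightarrow> 'a set" where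
  "tangent_space _ M x =
     {v. \<exists>U (\<phi> :: real^'m \<Rightarrow> 'a) u. is_chart M U \<phi> \<and> u \<in> U \<and> \<phi> u = x \<and>
          v \<in> range (frechet_derivative \<phi> (at u))}"

definition hausdorff_outer :: "nat \<Rightarrow> 'a::euclidean_space set \<Rightarrow> ennreal" where
  "hausdorff_outer m A =
     (SUP \<delta>\<in>{0<..}. INF S \<in> {S :: nat \<Rightarrow> 'a set. A \<subseteq> (\<Union>i. S i) \<and>
                                   (\<forall>i. bounded (S i) \<and> diameter (S i) \<le> \<delta>)}.
        (\<Sum>i. ennreal (unit_ball_vol (real m) * (diameter (S i) / 2) ^ m)))"

definition hausdorff_measure :: "nat \<Rightarrow> 'a::euclidean_space measure" where
  "hausdorff_measure m = measure_of UNIV (sets borel) (hausdorff_outer m)"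

text \<open>Riemannian volume measure of an m-dimensional embedded submanifold M
  (as a measure on the ambient space, concentrated on M).\<close>
definition volume_measure :: "'m::finite itself \<Rightarrow> 'a::euclidean_space set \<Rightarrow> 'a measure" where
  "volume_measure _ M = density (hausdorff_measure CARD('m)) (indicator M)"

definition reach :: "'a::euclidean_space set \<Rightarrow> ereal" where
  "reach M = Sup {ereal r | r. r \<ge> 0 \<and>
      (\<forall>y. infdist y M < r \<longrightarrow> (\<exists>!p. p \<in> M \<and> dist y p = infdist y M))}"

definition proj :: "'a::euclidean_space set \<Rightarrow> 'a \<Rightarrow> 'a" where
  "proj M y = (THE p. p \<in> M \<and> dist y p = infdist y M)"

definition varsigma :: "'a::euclidean_space measure \<Rightarrow> real \<Rightarrow> real \<Rightarrow> 'a \<Rightarrow> 'a \<Rightarrow> real" where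
  "varsigma \<mu> \<epsilon>n \<epsilon>w Q Q' =
     (\<integral>x. indicator {x. norm (x - Q) < \<epsilon>n powr (2/3) \<and> norm (x - Q') < \<epsilon>n powr (2/3)} x *
          exp (- ((norm (Q - x))\<^sup>2 + (norm (Q' - x))\<^sup>2) / (2 * \<epsilon>w\<^sup>2)) \<partial>\<mu>)"

definition xi :: "'a::euclidean_space set \<Rightarrow> 'a measure \<Rightarrow> real \<Rightarrow> real \<Rightarrow> 'a \<Rightarrow> 'a \<Rightarrow> real" where
  "xi M \<mu> \<epsilon>n \<epsilon>w y y' =
     exp (- ((norm (y - proj M y))\<^sup>2 + (norm (y' - proj M y'))\<^sup>2) / (2 * \<epsilon>w\<^sup>2)) *
     varsigma \<mu> \<epsilon>n \<epsilon>w (proj M y) (proj M y')"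

end

theory Submission
  imports Defs "HOL-Real_Asymp.Real_Asymp"
begin

(* Near each of its points, M is the image of a Euclidean ball of R^m under a
   bi-Lipschitz chart. Hence M \<inter> cball Q r is covered by the Lipschitz image of an
   m-dimensional ball of radius O(r); covering that ball by a fine cubical grid shows
   that its m-dimensional Hausdorff measure is O(r^m). Compactness gives finitely many
   charts, and rho \<le> rho_max turns this into mu (cball Q r) \<le> K r^m uniformly in Q and r.
   Splitting the Gaussian weight in varsigma along the shells cball Q ((j + 1) eps_w),
   on which it is at most exp (-j/2), gives varsigma \<le> K eps_w^m \<Sum>j (j + 1)^m exp (-j/2).
   Finally xi \<le> varsigma, since the extra exponential factor of xi is at most 1. *)

section \<open>Hausdorff measure of Lipschitz images\<close>

lemma sets_hausdorff_measure [simp]: "sets (hausdorff_measure m) = sets borel"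
  unfolding hausdorff_measure_def
  by (metis sets.sigma_sets_eq sets_measure_of space_borel top_greatest Pow_UNIV)

lemma emeasure_hausdorff_measure_le: "emeasure (hausdorff_measure m) A \<le> hausdorff_outer m A"
  unfolding hausdorff_measure_def emeasure_measure_of_conv by auto

lemma hausdorff_outer_mono: "A \<subseteq> B \<Longrightarrow> hausdorff_outer m A \<le> hausdorff_outer m B"
  unfolding hausdorff_outer_def by (intro SUP_mono' INF_superset_mono) auto

(* The covers are padded with empty sets, each contributing unit_ball_vol m * 0 ^ m:
   this vanishes only for m > 0. *)
lemma hausdorff_outer_le_finite_covers:
  assumes "m > 0"
    and covers: "\<And>\<delta>. \<delta> > 0 \<Longrightarrow> \<exists>(I :: 'i set) S. finite I \<and> A \<subseteq> (\<Union>i\<in>I. S i) \<and>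
               (\<forall>i\<in>I. bounded (S i) \<and> diameter (S i) \<le> \<delta>) \<and>
               (\<Sum>i\<in>I. unit_ball_vol (real m) * (diameter (S i) / 2) ^ m) \<le> c"
  shows "hausdorff_outer m A \<le> ennreal c"
  unfolding hausdorff_outer_def
proof (rule SUP_least)
  fix \<delta> :: real assume "\<delta> \<in> {0<..}"
  then have "\<delta> > 0" by simp
  then obtain I :: "'i set" and S where "finite I" and cover: "A \<subseteq> (\<Union>i\<in>I. S i)"
    and small: "\<forall>i\<in>I. bounded (S i) \<and> diameter (S i) \<le> \<delta>"
    and sum: "(\<Sum>i\<in>I. unit_ball_vol (real m) * (diameter (S i) / 2) ^ m) \<le> c"
    using covers[OF \<open>\<delta> > 0\<close>] by auto
  obtain e where e: "bij_betw e {..<card I} I"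
    using ex_bij_betw_nat_finite[OF \<open>finite I\<close>] atLeast0LessThan by auto
  define T where "T n = (if n < card I then S (e n) else {})" for n
  let ?vol = "\<lambda>D. ennreal (unit_ball_vol (real m) * (diameter D / 2) ^ m)"
  have "A \<subseteq> (\<Union>n. T n)"
  proof
    fix x assume "x \<in> A"
    then obtain i where "i \<in> I" "x \<in> S i" using cover by blast
    have "i \<in> e ` {..<card I}" using e \<open>i \<in> I\<close> by (simp add: bij_betw_def)
    then obtain n where "n < card I" "e n = i" by auto
    then show "x \<in> (\<Union>n. T n)" using \<open>x \<in> S i\<close> by (auto simp: T_def)
  qed
  moreover have "bounded (T n) \<and> diameter (T n) \<le> \<delta>" for n
    using small e \<open>\<delta> > 0\<close> by (auto simp: T_def bij_betw_def)
  ultimately have "(INF S\<in>{S. A \<subseteq> (\<Union>i. S i) \<and> (\<forall>i. bounded (S i) \<and> diameter (S i) \<le> \<delta>)}.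
                     \<Sum>i. ?vol (S i)) \<le> (\<Sum>n. ?vol (T n))"
    by (intro INF_lower) auto
  also have "(\<Sum>n. ?vol (T n)) = (\<Sum>n<card I. ?vol (S (e n)))"
    using \<open>m > 0\<close> by (subst suminf_finite[of "{..<card I}"]) (auto simp: T_def)
  also have "\<dots> = (\<Sum>i\<in>I. ?vol (S i))"
    by (rule sum.reindex_bij_betw[OF e])
  also have "\<dots> = ennreal (\<Sum>i\<in>I. unit_ball_vol (real m) * (diameter (S i) / 2) ^ m)"
    using small by (intro sum_ennreal) (simp add: diameter_ge_0)
  also have "\<dots> \<le> ennreal c"
    using sum by (rule ennreal_leI)
  finally show "(INF S\<in>{S. A \<subseteq> (\<Union>i. S i) \<and> (\<forall>i. bounded (S i) \<and> diameter (S i) \<le> \<delta>)}.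
                     \<Sum>i. ?vol (S i)) \<le> ennreal c" .
qed

lemma exists_grid_interval:
  fixes x t :: real
  assumes "k > 0" "t > 0" "0 \<le> x" "x \<le> real k * t"
  shows "\<exists>j<k. real j * t \<le> x \<and> x \<le> (real j + 1) * t"
proof -
  define j where "j = min (k - 1) (nat \<lfloor>x / t\<rfloor>)"
  have "real j \<le> real (nat \<lfloor>x / t\<rfloor>)"
    by (simp add: j_def)
  also have "\<dots> \<le> x / t"
    using assms by (simp add: of_nat_nat)
  finally have "real j \<le> x / t" .
  moreover have "x / t \<le> real j + 1"
  proof (cases "k - 1 \<le> nat \<lfloor>x / t\<rfloor>")
    case True
    then have "real j + 1 = real k" using assms by (simp add: j_def of_nat_diff)
    then show ?thesis using assms by (simp add: field_simps)
  next
    case False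
    then show ?thesis using assms by (simp add: j_def of_nat_nat less_imp_le)
  qed
  ultimately show ?thesis
    using assms by (intro exI[of _ j]) (auto simp: j_def field_simps)
qed

definition cart_grid_cell :: "real^'m::finite \<Rightarrow> real \<Rightarrow> ('m \<Rightarrow> nat) \<Rightarrow> (real^'m) set" where
  "cart_grid_cell b t g = {u. \<forall>i. b$i + real (g i) * t \<le> u$i \<and> u$i \<le> b$i + (real (g i) + 1) * t}"

lemma dist_le_in_cart_grid_cell:
  fixes x y b :: "real^'m::finite" and t :: real
  assumes "x \<in> cart_grid_cell b t g" "y \<in> cart_grid_cell b t g"
  shows "dist x y \<le> CARD('m) * t"
proof -
  have "dist x y \<le> (\<Sum>i\<in>UNIV. \<bar>(x - y)$i\<bar>)"
    unfolding dist_norm by (rule norm_le_l1_cart)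
  also have "\<dots> \<le> (\<Sum>i\<in>(UNIV::'m set). t)"
  proof (rule sum_mono)
    fix i
    have "b$i + real (g i) * t \<le> x$i" "x$i \<le> b$i + real (g i) * t + t"
      and "b$i + real (g i) * t \<le> y$i" "y$i \<le> b$i + real (g i) * t + t"
      using assms by (auto simp: cart_grid_cell_def distrib_right add.assoc)
    then show "\<bar>(x - y)$i\<bar> \<le> t"
      by (simp add: abs_le_iff)
  qed
  finally show ?thesis by simp
qed

lemma cball_subset_cart_grid_cells:
  fixes a :: "real^'m::finite"
  assumes "k > 0" "s > 0"
  shows "cball a s \<subseteq> (\<Union>g\<in>PiE UNIV (\<lambda>_. {..<k}). cart_grid_cell (\<chi> i. a$i - s) (2 * s / real k) g)"
proof
  fix u assume "u \<in> cball a s"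
  define t where "t = 2 * s / real k"
  have "t > 0" using assms by (simp add: t_def)
  have "\<forall>i. \<exists>j<k. real j * t \<le> u$i - (a$i - s) \<and> u$i - (a$i - s) \<le> (real j + 1) * t"
  proof
    fix i
    have "\<bar>u$i - a$i\<bar> \<le> s"
      using \<open>u \<in> cball a s\<close> component_le_norm_cart[of "u - a" i]
      by (auto simp: dist_norm norm_minus_commute)
    then show "\<exists>j<k. real j * t \<le> u$i - (a$i - s) \<and> u$i - (a$i - s) \<le> (real j + 1) * t"
      using assms \<open>t > 0\<close> by (intro exists_grid_interval) (auto simp: t_def)
  qed
  from choice[OF this] obtain g
    where "\<forall>i. g i < k \<and> real (g i) * t \<le> u$i - (a$i - s) \<and> u$i - (a$i - s) \<le> (real (g i) + 1) * t"
    by blast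
  then have "g \<in> PiE UNIV (\<lambda>_. {..<k})" "u \<in> cart_grid_cell (\<chi> i. a$i - s) t g"
    by (auto simp: PiE_UNIV_domain cart_grid_cell_def algebra_simps)
  then show "u \<in> (\<Union>g\<in>PiE UNIV (\<lambda>_. {..<k}). cart_grid_cell (\<chi> i. a$i - s) (2 * s / real k) g)"
    unfolding t_def by blast
qed

lemma bounded_diameter_le:
  fixes S :: "'a::metric_space set"
  assumes "d \<ge> 0" and dist_le: "\<And>x y. x \<in> S \<Longrightarrow> y \<in> S \<Longrightarrow> dist x y \<le> d"
  shows "bounded S" and "diameter S \<le> d"
proof -
  show "bounded S"
  proof (cases "S = {}")
    case False
    then obtain x0 where "x0 \<in> S" by blast
    then have "S \<subseteq> cball x0 d" using dist_le by auto
    then show ?thesis using bounded_cball bounded_subset by blast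
  qed simp
  then show "diameter S \<le> d"
    using assms diameter_bounded_bound by (cases "S = {}") (auto simp: diameter_def intro!: cSUP_least)
qed

lemma hausdorff_outer_lipschitz_image_le:
  fixes f :: "real^'m::finite \<Rightarrow> 'a::euclidean_space"
  assumes "A \<subseteq> cball a s" and "s > 0" and lip: "L-lipschitz_on A f"
  shows "hausdorff_outer CARD('m) (f ` A)
           \<le> ennreal (unit_ball_vol (real CARD('m)) * (L * CARD('m) * s) ^ CARD('m))"
proof (rule hausdorff_outer_le_finite_covers[where 'i = "'m \<Rightarrow> nat"])
  let ?m = "CARD('m)" and ?\<omega> = "unit_ball_vol (real CARD('m))"
  have "L \<ge> 0" using lip by (rule lipschitz_on_nonneg)
  fix \<delta> :: real assume "\<delta> > 0"
  define k where "k = nat \<lceil>L * ?m * (2 * s) / \<delta>\<rceil> + 1"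
  have "k > 0" by (simp add: k_def)
  have "L * ?m * (2 * s) / \<delta> \<le> real k"
    unfolding k_def by linarith
  define t where "t = 2 * s / real k"
  have "t > 0" using \<open>s > 0\<close> \<open>k > 0\<close> by (simp add: t_def)
  have "L * ?m * t \<le> \<delta>"
    using \<open>L * ?m * (2 * s) / \<delta> \<le> real k\<close> \<open>\<delta> > 0\<close> \<open>k > 0\<close> by (simp add: t_def field_simps)
  define I where "I = PiE UNIV (\<lambda>_::'m. {..<k})"
  define S where "S g = f ` (A \<inter> cart_grid_cell (\<chi> i. a$i - s) t g)" for g
  have "f ` A \<subseteq> (\<Union>g\<in>I. S g)"
    using cball_subset_cart_grid_cells[OF \<open>k > 0\<close> \<open>s > 0\<close>, of a] \<open>A \<subseteq> cball a s\<close>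
    by (fastforce simp: S_def I_def t_def)
  moreover have small: "bounded (S g) \<and> diameter (S g) \<le> L * ?m * t" for g
  proof -
    have "dist (f u) (f v) \<le> L * (?m * t)"
      if "u \<in> A \<inter> cart_grid_cell (\<chi> i. a$i - s) t g" "v \<in> A \<inter> cart_grid_cell (\<chi> i. a$i - s) t g" for u v
      using that lipschitz_onD[OF lip] dist_le_in_cart_grid_cell \<open>L \<ge> 0\<close>
      by (meson IntD1 IntD2 mult_left_mono order_trans)
    then show ?thesis
      using bounded_diameter_le[of "L * ?m * t" "S g"] \<open>L \<ge> 0\<close> \<open>t > 0\<close>
      by (auto simp: S_def mult.assoc)
  qed
  moreover have "(\<Sum>g\<in>I. ?\<omega> * (diameter (S g) / 2) ^ ?m) \<le> ?\<omega> * (L * ?m * s) ^ ?m"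
  proof -
    have "(\<Sum>g\<in>I. ?\<omega> * (diameter (S g) / 2) ^ ?m) \<le> (\<Sum>g\<in>I. ?\<omega> * (L * ?m * t / 2) ^ ?m)"
      using small diameter_ge_0
      by (intro sum_mono mult_left_mono power_mono divide_right_mono) auto
    also have "\<dots> = ?\<omega> * (real k * (L * ?m * t / 2)) ^ ?m"
      by (simp add: I_def card_PiE power_mult_distrib power_divide)
    also have "real k * (L * ?m * t / 2) = L * ?m * s"
      using \<open>k > 0\<close> by (simp add: t_def)
    finally show ?thesis .
  qed
  moreover have "finite I" by (simp add: I_def finite_PiE)
  ultimately show "\<exists>(I :: ('m \<Rightarrow> nat) set) S. finite I \<and> f ` A \<subseteq> (\<Union>i\<in>I. S i) \<and>
      (\<forall>i\<in>I. bounded (S i) \<and> diameter (S i) \<le> \<delta>) \<and>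
      (\<Sum>i\<in>I. ?\<omega> * (diameter (S i) / 2) ^ ?m) \<le> ?\<omega> * (L * ?m * s) ^ ?m"
    using \<open>L * ?m * t \<le> \<delta>\<close> by (intro exI[of _ I] exI[of _ S] conjI) (auto intro: order_trans)
qed simp

section \<open>Local bi-Lipschitz parametrisations\<close>

lemma continuous_derivative_onorm_near:
  fixes f' :: "'a::euclidean_space \<Rightarrow> 'a \<Rightarrow> 'b::real_normed_vector"
  assumes "open U" "x0 \<in> U" and linear: "\<And>x. x \<in> U \<Longrightarrow> linear (f' x)"
    and cont: "\<And>b. b \<in> Basis \<Longrightarrow> continuous_on U (\<lambda>x. f' x b)" and "e > 0"
  obtains \<delta> where "\<delta> > 0" "cball x0 \<delta> \<subseteq> U"
    "\<And>x. x \<in> cball x0 \<delta> \<Longrightarrow> onorm (\<lambda>v. f' x v - f' x0 v) \<le> e"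
proof -
  define \<sigma> where "\<sigma> x = (\<Sum>b\<in>Basis. norm (f' x b - f' x0 b))" for x
  have "continuous_on U \<sigma>"
    unfolding \<sigma>_def by (intro continuous_intros cont)
  then obtain d1 where "d1 > 0" and d1: "\<And>x. x \<in> U \<Longrightarrow> dist x x0 < d1 \<Longrightarrow> dist (\<sigma> x) (\<sigma> x0) < e"
    using \<open>x0 \<in> U\<close> \<open>e > 0\<close> unfolding continuous_on_iff by blast
  obtain d2 where "d2 > 0" "cball x0 d2 \<subseteq> U"
    using \<open>open U\<close> \<open>x0 \<in> U\<close> open_contains_cball by blast
  define \<delta> where "\<delta> = min (d1 / 2) d2"
  show ?thesis
  proof (rule that)
    show "\<delta> > 0" "cball x0 \<delta> \<subseteq> U"
      using \<open>d1 > 0\<close> \<open>d2 > 0\<close> \<open>cball x0 d2 \<subseteq> U\<close> by (auto simp: \<delta>_def)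
    fix x assume x: "x \<in> cball x0 \<delta>"
    then have "x \<in> U" "dist x x0 < d1"
      using \<open>d1 > 0\<close> \<open>cball x0 d2 \<subseteq> U\<close> by (auto simp: \<delta>_def dist_commute)
    then have "bounded_linear (\<lambda>v. f' x v - f' x0 v)"
      using linear \<open>x0 \<in> U\<close> by (intro linear_conv_bounded_linear[THEN iffD1] linear_compose_sub)
    then have "onorm (\<lambda>v. f' x v - f' x0 v) \<le> \<sigma> x"
      unfolding \<sigma>_def by (rule onorm_componentwise)
    also have "\<sigma> x < e"
      using d1[OF \<open>x \<in> U\<close> \<open>dist x x0 < d1\<close>] by (simp add: \<sigma>_def)
    finally show "onorm (\<lambda>v. f' x v - f' x0 v) \<le> e" by simp
  qed
qed

lemma dist_ge_of_derivative_near_bounded_below: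
  fixes f :: "'a::real_normed_vector \<Rightarrow> 'b::real_normed_vector"
  assumes "convex S" "x0 \<in> S" "x \<in> S" "y \<in> S"
    and deriv: "\<And>z. z \<in> S \<Longrightarrow> (f has_derivative f' z) (at z within S)"
    and near: "\<And>z. z \<in> S \<Longrightarrow> onorm (\<lambda>v. f' z v - f' x0 v) \<le> e"
    and below: "\<And>v. B * norm v \<le> norm (f' x0 v)"
  shows "(B - e) * dist x y \<le> dist (f x) (f y)"
proof -
  have "norm (f x - f y - f' x0 (x - y)) \<le> norm (x - y) * e"
  proof (rule differentiable_bound_linearization[OF _ deriv _ \<open>x0 \<in> S\<close>])
    show "y + t *\<^sub>R (x - y) \<in> S" if "t \<in> {0..1}" for t
      using convexD_alt[OF \<open>convex S\<close> \<open>y \<in> S\<close> \<open>x \<in> S\<close>, of t] that by (simp add: algebra_simps)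
    show "onorm (f' z - f' x0) \<le> e" if "z \<in> S" for z
      using near[OF that] by (simp add: fun_diff_def)
  qed
  moreover have "B * norm (x - y) \<le> norm (f x - f y) + norm (f x - f y - f' x0 (x - y))"
    using below[of "x - y"] norm_triangle_ineq4[of "f x - f y" "f x - f y - f' x0 (x - y)"] by simp
  ultimately show ?thesis
    by (simp add: dist_norm algebra_simps)
qed

lemma continuous_derivative_locally_bilipschitz:
  fixes f :: "'a::euclidean_space \<Rightarrow> 'b::euclidean_space"
  assumes "open U" "x0 \<in> U"
    and deriv: "\<And>x. x \<in> U \<Longrightarrow> (f has_derivative f' x) (at x)"
    and cont: "\<And>b. b \<in> Basis \<Longrightarrow> continuous_on U (\<lambda>x. f' x b)"
    and "inj (f' x0)"
  obtains \<delta> c L where "\<delta> > 0" "cball x0 \<delta> \<subseteq> U" "c > 0" "L-lipschitz_on (cball x0 \<delta>) f"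
    "\<And>x y. x \<in> cball x0 \<delta> \<Longrightarrow> y \<in> cball x0 \<delta> \<Longrightarrow> c * dist x y \<le> dist (f x) (f y)"
proof -
  have linear: "linear (f' x)" if "x \<in> U" for x
    using deriv[OF that] by (rule has_derivative_linear)
  obtain B where "B > 0" and B: "\<And>v. B * norm v \<le> norm (f' x0 v)"
    using linear_inj_bounded_below_pos[OF linear[OF \<open>x0 \<in> U\<close>] \<open>inj (f' x0)\<close>] by blast
  have "B / 2 > 0" using \<open>B > 0\<close> by simp
  obtain \<delta> where "\<delta> > 0" "cball x0 \<delta> \<subseteq> U"
    and near: "\<And>x. x \<in> cball x0 \<delta> \<Longrightarrow> onorm (\<lambda>v. f' x v - f' x0 v) \<le> B / 2"
    using continuous_derivative_onorm_near[OF \<open>open U\<close> \<open>x0 \<in> U\<close> linear cont \<open>B / 2 > 0\<close>] by blast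
  have deriv_within: "(f has_derivative f' x) (at x within cball x0 \<delta>)" if "x \<in> cball x0 \<delta>" for x
    using \<open>cball x0 \<delta> \<subseteq> U\<close> that by (intro has_derivative_at_withinI[OF deriv]) auto
  have bl: "bounded_linear (f' x)" if "x \<in> cball x0 \<delta>" for x
    using that \<open>cball x0 \<delta> \<subseteq> U\<close> linear by (auto simp: linear_conv_bounded_linear)
  have "x0 \<in> cball x0 \<delta>"
    using \<open>\<delta> > 0\<close> by simp
  show ?thesis
  proof (rule that)
    show "\<delta> > 0" "cball x0 \<delta> \<subseteq> U" "B / 2 > 0" by fact+
    show "(onorm (f' x0) + B / 2)-lipschitz_on (cball x0 \<delta>) f"
    proof (rule bounded_derivative_imp_lipschitz[OF deriv_within convex_cball])
      fix x assume x: "x \<in> cball x0 \<delta>"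
      have "onorm (f' x) = onorm (\<lambda>v. f' x0 v + (f' x v - f' x0 v))" by simp
      also have "\<dots> \<le> onorm (f' x0) + onorm (\<lambda>v. f' x v - f' x0 v)"
        using bl[OF x] bl[OF \<open>x0 \<in> cball x0 \<delta>\<close>] by (intro onorm_triangle bounded_linear_sub)
      also have "\<dots> \<le> onorm (f' x0) + B / 2"
        using near[OF x] by simp
      finally show "onorm (f' x) \<le> onorm (f' x0) + B / 2" .
    next
      show "0 \<le> onorm (f' x0) + B / 2"
        using onorm_pos_le[OF bl[OF \<open>x0 \<in> cball x0 \<delta>\<close>]] \<open>B > 0\<close> by simp
    qed
    fix x y assume "x \<in> cball x0 \<delta>" "y \<in> cball x0 \<delta>"
    then have "(B - B / 2) * dist x y \<le> dist (f x) (f y)"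
      using \<open>x0 \<in> cball x0 \<delta>\<close> deriv_within near B
      by (intro dist_ge_of_derivative_near_bounded_below[OF convex_cball])
    then show "B / 2 * dist x y \<le> dist (f x) (f y)" by simp
  qed
qed

lemma is_chart_derivative:
  assumes "is_chart M U \<phi>" "u \<in> U"
  shows "(\<phi> has_derivative frechet_derivative \<phi> (at u)) (at u)"
proof -
  have "Ck_on (Suc 0) U \<phi>"
    using assms(1) by (simp add: is_chart_def smooth_on_def)
  then have "\<phi> differentiable at u"
    using assms by (simp add: is_chart_def differentiable_on_eq_differentiable_at)
  then show ?thesis by (simp add: frechet_derivative_works)
qed

lemma is_chart_derivative_continuous:
  assumes "is_chart M U \<phi>" "b \<in> Basis"
  shows "continuous_on U (\<lambda>u. frechet_derivative \<phi> (at u) b)"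
proof -
  have "Ck_on (Suc (Suc 0)) U \<phi>"
    using assms(1) by (simp add: is_chart_def smooth_on_def)
  then show ?thesis
    using assms(2) by (auto intro: differentiable_imp_continuous_on)
qed

lemma is_chart_image_cball_contains_ball:
  assumes chart: "is_chart M U \<phi>" and "u \<in> U" "\<delta> > 0"
  obtains \<eta> where "\<eta> > 0" "M \<inter> ball (\<phi> u) \<eta> \<subseteq> \<phi> ` cball u \<delta>"
proof -
  obtain V where "open V" and V: "\<phi> ` U = M \<inter> V"
    using chart by (auto simp: is_chart_def)
  have "inj_on \<phi> U" and inv_cont: "continuous_on (\<phi> ` U) (inv_into U \<phi>)"
    using chart by (auto simp: is_chart_def)
  obtain \<eta>1 where "\<eta>1 > 0" "ball (\<phi> u) \<eta>1 \<subseteq> V"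
    using \<open>open V\<close> \<open>u \<in> U\<close> V open_contains_ball by blast
  have "inv_into U \<phi> (\<phi> u) = u"
    using \<open>u \<in> U\<close> \<open>inj_on \<phi> U\<close> by (simp add: inv_into_f_f)
  moreover have "\<exists>\<eta>2>0. \<forall>q\<in>\<phi> ` U. dist q (\<phi> u) < \<eta>2 \<longrightarrow>
                     dist (inv_into U \<phi> q) (inv_into U \<phi> (\<phi> u)) < \<delta>"
    using inv_cont \<open>u \<in> U\<close> \<open>\<delta> > 0\<close> unfolding continuous_on_iff by blast
  ultimately obtain \<eta>2 where "\<eta>2 > 0"
    and \<eta>2: "\<And>q. q \<in> \<phi> ` U \<Longrightarrow> dist q (\<phi> u) < \<eta>2 \<Longrightarrow> dist (inv_into U \<phi> q) u < \<delta>"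
    by auto
  show ?thesis
  proof (rule that)
    show "min \<eta>1 \<eta>2 > 0" using \<open>\<eta>1 > 0\<close> \<open>\<eta>2 > 0\<close> by simp
    show "M \<inter> ball (\<phi> u) (min \<eta>1 \<eta>2) \<subseteq> \<phi> ` cball u \<delta>"
    proof
      fix q assume q: "q \<in> M \<inter> ball (\<phi> u) (min \<eta>1 \<eta>2)"
      then have "q \<in> \<phi> ` U"
        using V \<open>ball (\<phi> u) \<eta>1 \<subseteq> V\<close> by auto
      moreover have "dist q (\<phi> u) < \<eta>2"
        using q by (simp add: dist_commute)
      ultimately have "inv_into U \<phi> q \<in> cball u \<delta>"
        using \<eta>2 by (simp add: dist_commute less_imp_le)
      then show "q \<in> \<phi> ` cball u \<delta>"
        using f_inv_into_f[OF \<open>q \<in> \<phi> ` U\<close>] by (metis image_eqI)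
    qed
  qed
qed

lemma smooth_submanifold_local_bilipschitz_chart:
  fixes M :: "'a::euclidean_space set"
  assumes "smooth_submanifold TYPE('m::finite) M" "p \<in> M"
  obtains \<phi> :: "real^'m \<Rightarrow> 'a" and u \<delta> L c \<eta>
  where "c > 0" "\<eta> > 0" "L-lipschitz_on (cball u \<delta>) \<phi>"
    "\<And>v w. v \<in> cball u \<delta> \<Longrightarrow> w \<in> cball u \<delta> \<Longrightarrow> c * dist v w \<le> dist (\<phi> v) (\<phi> w)"
    "M \<inter> ball p \<eta> \<subseteq> \<phi> ` cball u \<delta>"
proof -
  obtain U and \<phi> :: "real^'m \<Rightarrow> 'a" where chart: "is_chart M U \<phi>" and "p \<in> \<phi> ` U"
    using assms unfolding smooth_submanifold_def by blast
  then obtain u where "u \<in> U" "p = \<phi> u" by blast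
  have "open U" "inj (frechet_derivative \<phi> (at u))"
    using chart \<open>u \<in> U\<close> by (auto simp: is_chart_def)
  have deriv: "\<And>v. v \<in> U \<Longrightarrow> (\<phi> has_derivative frechet_derivative \<phi> (at v)) (at v)"
    by (rule is_chart_derivative[OF chart])
  have deriv_cont: "\<And>b. b \<in> Basis \<Longrightarrow> continuous_on U (\<lambda>v. frechet_derivative \<phi> (at v) b)"
    by (rule is_chart_derivative_continuous[OF chart])
  obtain \<delta> c L where "\<delta> > 0" "cball u \<delta> \<subseteq> U" "c > 0" "L-lipschitz_on (cball u \<delta>) \<phi>"
    and "\<And>v w. v \<in> cball u \<delta> \<Longrightarrow> w \<in> cball u \<delta> \<Longrightarrow> c * dist v w \<le> dist (\<phi> v) (\<phi> w)"
    using continuous_derivative_locally_bilipschitz[OF \<open>open U\<close> \<open>u \<in> U\<close> deriv deriv_cont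
        \<open>inj (frechet_derivative \<phi> (at u))\<close>] by blast
  moreover obtain \<eta> where "\<eta> > 0" "M \<inter> ball p \<eta> \<subseteq> \<phi> ` cball u \<delta>"
    using is_chart_image_cball_contains_ball[OF chart \<open>u \<in> U\<close> \<open>\<delta> > 0\<close>] \<open>p = \<phi> u\<close> by blast
  ultimately show ?thesis
    using that by blast
qed

section \<open>Volume growth of balls\<close>

lemma preimage_cball_subset_cball:
  assumes "c > 0" and lower: "\<And>v w. v \<in> S \<Longrightarrow> w \<in> S \<Longrightarrow> c * dist v w \<le> dist (\<phi> v) (\<phi> w)"
  obtains v1 where "S \<inter> \<phi> -` cball Q r \<subseteq> cball v1 (2 * r / c)"
proof (rule that)
  define v1 where "v1 = (SOME v. v \<in> S \<inter> \<phi> -` cball Q r)"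
  show "S \<inter> \<phi> -` cball Q r \<subseteq> cball v1 (2 * r / c)"
  proof
    fix v assume v: "v \<in> S \<inter> \<phi> -` cball Q r"
    then have v1: "v1 \<in> S \<inter> \<phi> -` cball Q r" unfolding v1_def by (rule someI)
    have "c * dist v1 v \<le> dist (\<phi> v1) (\<phi> v)"
      using v v1 lower by simp
    also have "\<dots> \<le> dist (\<phi> v1) Q + dist Q (\<phi> v)"
      by (rule dist_triangle)
    also have "\<dots> \<le> 2 * r"
      using v v1 by (simp add: dist_commute)
    finally show "v \<in> cball v1 (2 * r / c)"
      using \<open>c > 0\<close> by (simp add: field_simps)
  qed
qed

lemma smooth_submanifold_local_volume_growth:
  fixes M :: "'a::euclidean_space set"
  assumes "smooth_submanifold TYPE('m::finite) M" "p \<in> M"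
  obtains \<eta> K where "\<eta> > 0" "K \<ge> 0"
    "\<And>Q r. r > 0 \<Longrightarrow> emeasure (hausdorff_measure CARD('m)) (M \<inter> ball p \<eta> \<inter> cball Q r)
                       \<le> ennreal (K * r ^ CARD('m))"
proof -
  let ?m = "CARD('m)" and ?\<omega> = "unit_ball_vol (real CARD('m))"
  obtain \<phi> :: "real^'m \<Rightarrow> 'a" and u \<delta> L c \<eta>
    where "c > 0" "\<eta> > 0" and lip: "L-lipschitz_on (cball u \<delta>) \<phi>"
      and lower: "\<And>v w. v \<in> cball u \<delta> \<Longrightarrow> w \<in> cball u \<delta> \<Longrightarrow> c * dist v w \<le> dist (\<phi> v) (\<phi> w)"
      and cover: "M \<inter> ball p \<eta> \<subseteq> \<phi> ` cball u \<delta>"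
    using smooth_submanifold_local_bilipschitz_chart[OF assms] by metis
  have "L \<ge> 0" using lip by (rule lipschitz_on_nonneg)
  show ?thesis
  proof (rule that)
    show "\<eta> > 0" by fact
    show "?\<omega> * (2 * L * ?m / c) ^ ?m \<ge> 0"
      using \<open>L \<ge> 0\<close> \<open>c > 0\<close> by simp
    fix Q :: 'a and r :: real assume "r > 0"
    define A where "A = cball u \<delta> \<inter> \<phi> -` cball Q r"
    obtain v1 where "A \<subseteq> cball v1 (2 * r / c)"
      unfolding A_def using preimage_cball_subset_cball[OF \<open>c > 0\<close> lower] by blast
    have "emeasure (hausdorff_measure ?m) (M \<inter> ball p \<eta> \<inter> cball Q r)
        \<le> hausdorff_outer ?m (M \<inter> ball p \<eta> \<inter> cball Q r)"
      by (rule emeasure_hausdorff_measure_le)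
    also have "\<dots> \<le> hausdorff_outer ?m (\<phi> ` A)"
      using cover by (intro hausdorff_outer_mono) (auto simp: A_def)
    also have "\<dots> \<le> ennreal (?\<omega> * (L * ?m * (2 * r / c)) ^ ?m)"
      using \<open>r > 0\<close> \<open>c > 0\<close>
      by (intro hausdorff_outer_lipschitz_image_le[OF \<open>A \<subseteq> cball v1 (2 * r / c)\<close>]
          lipschitz_on_subset[OF lip]) (auto simp: A_def)
    also have "?\<omega> * (L * ?m * (2 * r / c)) ^ ?m = ?\<omega> * (2 * L * ?m / c) ^ ?m * r ^ ?m"
      by (simp add: power_mult_distrib power_divide)
    finally show "emeasure (hausdorff_measure ?m) (M \<inter> ball p \<eta> \<inter> cball Q r)
        \<le> ennreal (?\<omega> * (2 * L * ?m / c) ^ ?m * r ^ ?m)" .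
  qed
qed

lemma compact_smooth_submanifold_volume_growth:
  fixes M :: "'a::euclidean_space set"
  assumes "smooth_submanifold TYPE('m::finite) M" "compact M"
  obtains K where "K \<ge> 0"
    "\<And>Q r. r > 0 \<Longrightarrow> emeasure (hausdorff_measure CARD('m)) (M \<inter> cball Q r) \<le> ennreal (K * r ^ CARD('m))"
proof -
  let ?m = "CARD('m)" and ?H = "hausdorff_measure CARD('m) :: 'a measure"
  have "\<forall>p\<in>M. \<exists>\<eta> K. \<eta> > 0 \<and> K \<ge> 0 \<and>
      (\<forall>Q r. r > 0 \<longrightarrow> emeasure ?H (M \<inter> ball p \<eta> \<inter> cball Q r) \<le> ennreal (K * r ^ ?m))"
    using smooth_submanifold_local_volume_growth[OF assms(1)] by metis
  then obtain \<eta> K where "\<And>p. p \<in> M \<Longrightarrow> \<eta> p > 0 \<and> K p \<ge> 0"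
    and local: "\<And>p Q r. p \<in> M \<Longrightarrow> r > 0 \<Longrightarrow>
                  emeasure ?H (M \<inter> ball p (\<eta> p) \<inter> cball Q r) \<le> ennreal (K p * r ^ ?m)"
    by metis
  moreover obtain F where "F \<subseteq> M" "finite F" and cover: "M \<subseteq> (\<Union>p\<in>F. ball p (\<eta> p))"
  proof (rule compactE_image[OF \<open>compact M\<close>, of M "\<lambda>p. ball p (\<eta> p)"])
    show "M \<subseteq> (\<Union>p\<in>M. ball p (\<eta> p))"
      using calculation by force
  qed (auto intro: that)
  ultimately have K_nonneg: "\<And>p. p \<in> F \<Longrightarrow> K p \<ge> 0" by blast
  have M_borel: "M \<in> sets borel"
    using \<open>compact M\<close> by (simp add: borel_compact)
  show ?thesis
  proof (rule that)
    show "(\<Sum>p\<in>F. K p) \<ge> 0" using K_nonneg by (rule sum_nonneg)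
    fix Q :: 'a and r :: real assume "r > 0"
    have piece: "M \<inter> ball p (\<eta> p) \<inter> cball Q r \<in> sets ?H" for p
      using M_borel by auto
    have "M \<inter> cball Q r \<subseteq> (\<Union>p\<in>F. M \<inter> ball p (\<eta> p) \<inter> cball Q r)"
      using cover by blast
    then have "emeasure ?H (M \<inter> cball Q r) \<le> emeasure ?H (\<Union>p\<in>F. M \<inter> ball p (\<eta> p) \<inter> cball Q r)"
      by (rule emeasure_mono) (intro sets.finite_UN \<open>finite F\<close> piece)
    also have "\<dots> \<le> (\<Sum>p\<in>F. emeasure ?H (M \<inter> ball p (\<eta> p) \<inter> cball Q r))"
      using piece \<open>finite F\<close> by (intro emeasure_subadditive_finite) auto
    also have "\<dots> \<le> (\<Sum>p\<in>F. ennreal (K p * r ^ ?m))"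
      using local \<open>F \<subseteq> M\<close> \<open>r > 0\<close> by (intro sum_mono) auto
    also have "\<dots> = ennreal ((\<Sum>p\<in>F. K p) * r ^ ?m)"
      using K_nonneg \<open>r > 0\<close> by (simp add: sum_distrib_right sum_ennreal)
    finally show "emeasure ?H (M \<inter> cball Q r) \<le> ennreal ((\<Sum>p\<in>F. K p) * r ^ ?m)" .
  qed
qed

lemma emeasure_density_volume_measure_le:
  fixes M :: "'a::euclidean_space set"
  assumes "M \<in> sets borel" "B \<in> sets borel" and bound: "\<And>x. x \<in> M \<Longrightarrow> \<rho> x \<le> \<rho>max"
  shows "emeasure (density (volume_measure TYPE('m::finite) M) (\<lambda>x. ennreal (\<rho> x))) B
           \<le> ennreal \<rho>max * emeasure (hausdorff_measure CARD('m)) (M \<inter> B)"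
proof -
  let ?H = "hausdorff_measure CARD('m) :: 'a measure" and ?V = "volume_measure TYPE('m) M"
  \<comment> \<open>\<open>\<rho>\<close> need not be measurable, so \<open>density_def\<close> only gives an upper bound here.\<close>
  have "emeasure (density ?V (\<lambda>x. ennreal (\<rho> x))) B \<le> (\<integral>\<^sup>+x. ennreal (\<rho> x) * indicator B x \<partial>?V)"
    unfolding density_def emeasure_measure_of_conv by auto
  also have "\<dots> \<le> (\<integral>\<^sup>+x. ennreal \<rho>max * indicator B x \<partial>?V)"
  proof (rule nn_integral_mono_AE)
    have "AE x in ?V. x \<in> M"
      using \<open>M \<in> sets borel\<close> unfolding volume_measure_def
      by (subst AE_density) (auto simp: indicator_def intro!: borel_measurable_indicator)
    then show "AE x in ?V. ennreal (\<rho> x) * indicator B x \<le> ennreal \<rho>max * indicator B x"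
      by eventually_elim (auto simp: indicator_def intro: ennreal_leI bound)
  qed
  also have "\<dots> = ennreal \<rho>max * emeasure ?V B"
    using \<open>B \<in> sets borel\<close> by (subst nn_integral_cmult_indicator) (auto simp: volume_measure_def)
  also have "emeasure ?V B = emeasure ?H (M \<inter> B)"
    using assms(1,2) unfolding volume_measure_def
    by (subst emeasure_density)
      (auto simp: indicator_inter_arith[symmetric] intro!: nn_integral_indicator borel_measurable_indicator)
  finally show ?thesis .
qed

lemma density_volume_measure_ball_growth:
  fixes M :: "'a::euclidean_space set"
  assumes "smooth_submanifold TYPE('m::finite) M" "compact M" "\<And>x. x \<in> M \<Longrightarrow> \<rho> x \<le> \<rho>max"
  obtains K where "K \<ge> 0"
    "\<And>Q r. r > 0 \<Longrightarrow> emeasure (density (volume_measure TYPE('m) M) (\<lambda>x. ennreal (\<rho> x))) (cball Q r)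
                       \<le> ennreal (K * r ^ CARD('m))"
proof -
  obtain K where "K \<ge> 0"
    and growth: "\<And>Q r. r > 0 \<Longrightarrow> emeasure (hausdorff_measure CARD('m)) (M \<inter> cball Q r) \<le> ennreal (K * r ^ CARD('m))"
    using compact_smooth_submanifold_volume_growth[OF assms(1,2)] by blast
  show ?thesis
  proof (rule that)
    show "max \<rho>max 0 * K \<ge> 0" using \<open>K \<ge> 0\<close> by simp
    fix Q :: 'a and r :: real assume "r > 0"
    have "emeasure (density (volume_measure TYPE('m) M) (\<lambda>x. ennreal (\<rho> x))) (cball Q r)
        \<le> ennreal \<rho>max * emeasure (hausdorff_measure CARD('m)) (M \<inter> cball Q r)"
      using \<open>compact M\<close> assms(3) by (intro emeasure_density_volume_measure_le) (auto simp: borel_compact)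
    also have "\<dots> \<le> ennreal (max \<rho>max 0) * ennreal (K * r ^ CARD('m))"
      using growth[OF \<open>r > 0\<close>] by (intro mult_mono ennreal_leI) auto
    also have "\<dots> = ennreal (max \<rho>max 0 * (K * r ^ CARD('m)))"
      using \<open>K \<ge> 0\<close> \<open>r > 0\<close> by (intro ennreal_mult[symmetric]) auto
    also have "\<dots> = ennreal (max \<rho>max 0 * K * r ^ CARD('m))"
      by (simp add: mult.assoc)
    finally show "emeasure (density (volume_measure TYPE('m) M) (\<lambda>x. ennreal (\<rho> x))) (cball Q r)
        \<le> ennreal (max \<rho>max 0 * K * r ^ CARD('m))" .
  qed
qed

section \<open>Gaussian bounds\<close>

lemma summable_gaussian_shells: "summable (\<lambda>j. (real j + 1) ^ m * exp (- real j / 2))"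
proof (rule summable_comparison_test_bigo)
  show "summable (\<lambda>j. norm (inverse (real j ^ 2)))"
    using inverse_power_summable[of 2, where 'a=real] by simp
  show "(\<lambda>j. (real j + 1) ^ m * exp (- real j / 2)) \<in> O(\<lambda>j. inverse (real j ^ 2))"
    by real_asymp
qed

definition gaussian_shell_constant :: "nat \<Rightarrow> real" where
  "gaussian_shell_constant m = (\<Sum>j. (real j + 1) ^ m * exp (- real j / 2))"

lemma gaussian_shell_constant_nonneg: "gaussian_shell_constant m \<ge> 0"
  unfolding gaussian_shell_constant_def by (rule suminf_nonneg[OF summable_gaussian_shells]) simp

lemma gaussian_le_shell:
  fixes Q x :: "'a::real_normed_vector"
  assumes "w > 0"
  obtains k :: nat where "x \<in> cball Q ((real k + 1) * w)"
    and "exp (- (norm (Q - x))\<^sup>2 / (2 * w\<^sup>2)) \<le> exp (- real k / 2)"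
proof
  define d where "d = norm (Q - x) / w"
  have d: "d \<ge> 0" using assms by (simp add: d_def)
  have "norm (Q - x) = d * w" using assms by (simp add: d_def)
  also have "\<dots> \<le> (real (nat \<lfloor>d\<rfloor>) + 1) * w"
    using assms d by (intro mult_right_mono) (auto simp: of_nat_nat)
  finally show "x \<in> cball Q ((real (nat \<lfloor>d\<rfloor>) + 1) * w)" by (simp add: dist_norm)
  have "real (nat \<lfloor>d\<rfloor>) \<le> real (nat \<lfloor>d\<rfloor>) ^ 2"
    by (cases "nat \<lfloor>d\<rfloor>") (auto simp: power2_eq_square)
  also have "\<dots> \<le> d\<^sup>2"
    using d by (intro power_mono) (auto simp: of_nat_nat)
  finally have "real (nat \<lfloor>d\<rfloor>) \<le> d\<^sup>2" .
  then show "exp (- (norm (Q - x))\<^sup>2 / (2 * w\<^sup>2)) \<le> exp (- real (nat \<lfloor>d\<rfloor>) / 2)"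
    using assms by (simp add: d_def power_divide field_simps)
qed

lemma nn_integral_gaussian_le_of_ball_growth:
  fixes \<mu> :: "'a::euclidean_space measure"
  assumes sets: "sets \<mu> = sets borel"
    and growth: "\<And>r. r > 0 \<Longrightarrow> emeasure \<mu> (cball Q r) \<le> ennreal (K * r ^ m)"
    and "K \<ge> 0" and "w > 0"
  shows "(\<integral>\<^sup>+x. ennreal (exp (- (norm (Q - x))\<^sup>2 / (2 * w\<^sup>2))) \<partial>\<mu>)
           \<le> ennreal (K * gaussian_shell_constant m * w ^ m)"
proof -
  define shell where "shell j = cball Q ((real j + 1) * w)" for j :: nat
  have "(\<integral>\<^sup>+x. ennreal (exp (- (norm (Q - x))\<^sup>2 / (2 * w\<^sup>2))) \<partial>\<mu>)
      \<le> (\<integral>\<^sup>+x. (\<Sum>j. ennreal (exp (- real j / 2)) * indicator (shell j) x) \<partial>\<mu>)"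
  proof (rule nn_integral_mono)
    fix x
    obtain k where "x \<in> shell k" "exp (- (norm (Q - x))\<^sup>2 / (2 * w\<^sup>2)) \<le> exp (- real k / 2)"
      using gaussian_le_shell[OF \<open>w > 0\<close>] unfolding shell_def by blast
    then have "ennreal (exp (- (norm (Q - x))\<^sup>2 / (2 * w\<^sup>2)))
        \<le> ennreal (exp (- real k / 2)) * indicator (shell k) x"
      by (simp add: ennreal_leI)
    also have "\<dots> \<le> (\<Sum>j. ennreal (exp (- real j / 2)) * indicator (shell j) x)"
      using sum_le_suminf[OF summableI, of "{k}"] by simp
    finally show "ennreal (exp (- (norm (Q - x))\<^sup>2 / (2 * w\<^sup>2)))
        \<le> (\<Sum>j. ennreal (exp (- real j / 2)) * indicator (shell j) x)" .
  qed
  also have "\<dots> = (\<Sum>j. \<integral>\<^sup>+x. ennreal (exp (- real j / 2)) * indicator (shell j) x \<partial>\<mu>)"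
    by (rule nn_integral_suminf) (auto simp: measurable_cong_sets[OF sets refl] shell_def borel_closed intro!: borel_measurable_times_ennreal borel_measurable_indicator)
  also have "\<dots> = (\<Sum>j. ennreal (exp (- real j / 2)) * emeasure \<mu> (shell j))"
    by (subst nn_integral_cmult_indicator) (auto simp: sets shell_def borel_closed)
  also have "\<dots> \<le> (\<Sum>j. ennreal (K * w ^ m * ((real j + 1) ^ m * exp (- real j / 2))))"
  proof (rule suminf_le[OF _ summableI summableI])
    fix j
    have "ennreal (exp (- real j / 2)) * emeasure \<mu> (shell j)
        \<le> ennreal (exp (- real j / 2)) * ennreal (K * ((real j + 1) * w) ^ m)"
      unfolding shell_def using \<open>w > 0\<close> by (intro mult_left_mono growth) auto
    also have "\<dots> = ennreal (K * w ^ m * ((real j + 1) ^ m * exp (- real j / 2)))"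
      using \<open>K \<ge> 0\<close> \<open>w > 0\<close> by (simp flip: ennreal_mult' add: power_mult_distrib mult_ac)
    finally show "ennreal (exp (- real j / 2)) * emeasure \<mu> (shell j)
        \<le> ennreal (K * w ^ m * ((real j + 1) ^ m * exp (- real j / 2)))" .
  qed
  also have "\<dots> = ennreal (\<Sum>j. K * w ^ m * ((real j + 1) ^ m * exp (- real j / 2)))"
    using \<open>K \<ge> 0\<close> \<open>w > 0\<close> by (intro suminf_ennreal2 summable_mult summable_gaussian_shells) auto
  also have "(\<Sum>j. K * w ^ m * ((real j + 1) ^ m * exp (- real j / 2))) = K * w ^ m * gaussian_shell_constant m"
    unfolding gaussian_shell_constant_def by (rule suminf_mult[OF summable_gaussian_shells])
  finally show ?thesis by (simp add: mult_ac)
qed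

lemma indicator_mult_exp_le:
  fixes a b c :: real
  assumes "0 \<le> b" "0 \<le> c"
  shows "indicator S x * exp (- (a + b) / c) \<le> exp (- a / c)"
proof -
  have "exp (- (a + b) / c) \<le> exp (- a / c)"
    using divide_right_mono[of "- (a + b)" "- a" c] assms by simp
  then show ?thesis by (simp add: indicator_def)
qed

lemma varsigma_le_of_ball_growth:
  fixes \<mu> :: "'a::euclidean_space measure"
  assumes "sets \<mu> = sets borel"
    and "\<And>r. r > 0 \<Longrightarrow> emeasure \<mu> (cball Q r) \<le> ennreal (K * r ^ m)"
    and "K \<ge> 0" and "w > 0"
  shows "varsigma \<mu> \<epsilon>n w Q Q' \<le> K * gaussian_shell_constant m * w ^ m"
  unfolding varsigma_def
proof (rule integral_real_bounded, goal_cases nonneg bound)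
  case nonneg
  show ?case using assms gaussian_shell_constant_nonneg by simp
next
  case bound
  show ?case
    by (rule order_trans[OF nn_integral_mono nn_integral_gaussian_le_of_ball_growth[OF assms]])
      (intro ennreal_leI indicator_mult_exp_le; simp)
qed

lemma varsigma_nonneg: "0 \<le> varsigma \<mu> \<epsilon>n w Q Q'"
  unfolding varsigma_def by (intro integral_nonneg_AE AE_I2) (simp add: indicator_def)

lemma xi_le_varsigma: "xi M \<mu> \<epsilon>n w y y' \<le> varsigma \<mu> \<epsilon>n w (proj M y) (proj M y')"
proof -
  have "exp (- ((norm (y - proj M y))\<^sup>2 + (norm (y' - proj M y'))\<^sup>2) / (2 * w\<^sup>2)) \<le> 1"
    by (simp add: divide_nonpos_nonneg)
  from mult_right_mono[OF this varsigma_nonneg] show ?thesis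
    by (simp add: xi_def)
qed

theorem lemma6p1:
  fixes M :: "(real^'d) set" and \<rho> :: "real^'d \<Rightarrow> real"
    and \<rho>min \<rho>max R :: real
  assumes manifold: "smooth_submanifold TYPE('m::finite) M"
    and compact: "compact M" and connected: "connected M"
    and orient: "orientable TYPE('m) M"
    and reach: "reach M = ereal R" and R_pos: "R > 0"
    and rho_cont: "continuous_on M \<rho>"
    and rho_min_pos: "0 < \<rho>min"
    and rho_bounds: "\<forall>x\<in>M. \<rho>min \<le> \<rho> x \<and> \<rho> x \<le> \<rho>max"
    and prob: "prob_space (density (volume_measure TYPE('m) M) (\<lambda>x. ennreal (\<rho> x)))"
  shows "\<exists>C>0. \<forall>\<tau> \<epsilon> Xbar. \<tau> > 0 \<longrightarrow> \<epsilon> > 0 \<longrightarrow> \<epsilon> \<le> 1 \<longrightarrow> \<epsilon> \<le> R / 2 \<longrightarrow>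
     finite Xbar \<longrightarrow>
     (\<forall>y\<in>Xbar. \<exists>x\<in>M. \<exists>h. (\<forall>v\<in>tangent_space TYPE('m) M x. h \<bullet> v = 0) \<and>
                         norm h < \<epsilon> powr (\<tau> + 1) \<and> y = x + h) \<longrightarrow>
     (\<forall>y\<in>Xbar. \<forall>y'\<in>Xbar.
        varsigma (density (volume_measure TYPE('m) M) (\<lambda>x. ennreal (\<rho> x)))
                 (\<epsilon> powr (\<tau> + 1)) (\<epsilon> powr \<tau>) (proj M y) (proj M y')
          \<le> C * (\<epsilon> powr \<tau>) ^ CARD('m) \<and>
        xi M (density (volume_measure TYPE('m) M) (\<lambda>x. ennreal (\<rho> x)))
                 (\<epsilon> powr (\<tau> + 1)) (\<epsilon> powr \<tau>) y y'
          \<le> C * (\<epsilon> powr \<tau>) ^ CARD('m))"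
proof -
  let ?\<mu> = "density (volume_measure TYPE('m) M) (\<lambda>x. ennreal (\<rho> x))" and ?m = "CARD('m)"
  obtain K where "K \<ge> 0"
    and growth: "\<And>Q r. r > 0 \<Longrightarrow> emeasure ?\<mu> (cball Q r) \<le> ennreal (K * r ^ ?m)"
    using density_volume_measure_ball_growth[OF manifold compact] rho_bounds by blast
  have sets: "sets ?\<mu> = sets borel" by (simp add: volume_measure_def)
  define C where "C = K * gaussian_shell_constant ?m + 1"
  have "C > 0"
    using \<open>K \<ge> 0\<close> gaussian_shell_constant_nonneg by (simp add: C_def add_nonneg_pos)
  have varsigma_le: "varsigma ?\<mu> \<epsilon>n w Q Q' \<le> C * w ^ ?m" if "w > 0" for \<epsilon>n w Q Q'
  proof -
    have "varsigma ?\<mu> \<epsilon>n w Q Q' \<le> K * gaussian_shell_constant ?m * w ^ ?m"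
      by (rule varsigma_le_of_ball_growth[OF sets growth \<open>K \<ge> 0\<close> \<open>w > 0\<close>])
    also have "\<dots> \<le> C * w ^ ?m"
      using \<open>w > 0\<close> by (simp add: C_def distrib_right)
    finally show ?thesis .
  qed
  show ?thesis
    using \<open>C > 0\<close> varsigma_le order_trans[OF xi_le_varsigma varsigma_le] by auto
qed

end
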